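(* In the Call-by-Value probabilistic $\lambda$-calculus (as defined in the context), for each multi-distribution $\mathbf m$: 1. $[\![\mathbf m]\!]$ is defined, i.e. $\mathrm{Lim}_{\mathrm{obs}_{\mathrm{Nnf}}}(\mathbf m,\Rightarrow)$ has a greatest element; 2. for every subdistribution $\mathbf r$: $\mathbf m\Rrightarrow_E^{\mathrm{obs}_{\mathrm{Nnf}}}\mathbf r$ if and only if $\mathbf r=[\![\mathbf m]\!]$. Hence $\Rrightarrow_E$ is an $\mathrm{obs}_{\mathrm{Nnf}}$-normalizing strategy for $\Rightarrow$.
   Context: Terms $\Lambda_\oplus$: $M::=x\mid\lambda x.M\mid MM\mid M\oplus M$; values $V::=x\mid\lambda x.M$. Contexts $C::=[\,]\mid MC\mid CM\mid\lambda x.C\mid C\oplus M\mid M\oplus C$; weak contexts $W::=[\,]\mid WM\mid MW$. A multi-distribution is a finite multiset $[p_iM_i]_{i\in I}$ with $p_i\in(0,1]$, $\sum_ip_i\le1$; $+$ is multiset union, $q\cdot[p_iM_i]_i=[(qp_i)M_i]_i$, $[M]:=[1M]$. $C[(\lambda x.M)V]\to_{\beta_v}[C[M\{V/x\}]]$; $W[M\oplus N]\to_\oplus[\tfrac12W[M],\tfrac12W[N]]$; $\to:=\to_{\beta_v}\cup\to_\oplus$; surface reduction $\to_s$ is $\to_\oplus$ together with the closure of $\beta_v$ under weak contexts. $M$ is $\to$-normal (surface-normal) if no $\mathbf m$ with $M\to\mathbf m$ ($M\to_s\mathbf m$); $\mathrm{Nnf}$ is the set of $\to$-normal terms. Lifting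 $\Rightarrow_r$ of $r$: least relation with $[M]\Rightarrow_r[M]$; $[M]\Rightarrow_r\mathbf m$ if $M\,r\,\mathbf m$; $[p_iM_i]_{i\in I}\Rightarrow_r\sum_ip_i\cdot\mathbf m_i$ if $[M_i]\Rightarrow_r\mathbf m_i$ for all $i$. Full lifting $\Rrightarrow_r$: same, but $[M]\Rrightarrow_r[M]$ only when $M$ is $\to$-normal. $\Rightarrow$ is the lifting of $\to$. Let $\rightsquigarrow_U$ be the unbiased iteration of weak $\beta_v$-reduction on $\Lambda_\oplus$: if $M\to_wM'$ (closure of $\beta_v$ under weak contexts) then $M\rightsquigarrow_UM'$; if $M$ is $\to_w$-normal: $\lambda x.P\rightsquigarrow_U\lambda x.P'$, $PQ\rightsquigarrow_UP'Q$, $PQ\rightsquigarrow_UPQ'$, $P\oplus Q\rightsquigarrow_UP'\oplus Q$, $P\oplus Q\rightsquigarrow_UP\oplus Q'$ whenever $P\rightsquigarrow_UP'$, resp. $Q\rightsquigarrow_UQ'$. $\rightsquigarrow_E$: if $M$ is not surface-normal and $M\to_s\mathbf m$ then $M\rightsquigarrow_E\mathbf m$; if $M$ is surface-normal and $M\rightsquigarrow_UM'$ then $M\rightsquigarrow_E[M']$; $\Rrightarrow_E$ is its full lifting. $\mathrm{obs}_{\mathrm{Nnf}}([p_iM_i]_{i\in I})$ is the subdistribution $\mu$ on $\mathrm{Nnf}$ with $\mu(N)=\sum_{i:\,M_i=N}p_i$, ordered pointwise. For $R$ a relation on multi-distributions, $\mathbf m\,R^{\mathrm{obs}_{\mathrm{Nnf}}}\,\mathbf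 r$ means there is a maximal $R$-sequence $(\mathbf m_n)_n$ from $\mathbf m$ (infinite, or finite ending in an $R$-normal element and then continued constantly) with $\sup_n\mathrm{obs}_{\mathrm{Nnf}}(\mathbf m_n)=\mathbf r$; $\mathrm{Lim}_{\mathrm{obs}_{\mathrm{Nnf}}}(\mathbf m,R)$ is the set of such $\mathbf r$; $[\![\mathbf m]\!]$ is the greatest element of $\mathrm{Lim}_{\mathrm{obs}_{\mathrm{Nnf}}}(\mathbf m,\Rightarrow)$. A subrelation $R'\subseteq R$ is $\mathrm{obs}_{\mathrm{Nnf}}$-normalizing for $R$ if it is asymptotically complete ($\mathbf m R^{\mathrm{obs}}\mathbf q$ implies $\mathbf m R'^{\mathrm{obs}}\mathbf p$ for some $\mathbf p\ge\mathbf q$) and asymptotically uniform (every element of $\mathrm{Lim}(\mathbf m,R')$ is maximal in $\mathrm{Lim}(\mathbf m,R')$), for all $\mathbf m$. *)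

theory Defs
  imports Complex_Main "HOL-Library.Multiset"
begin

datatype trm = Var nat | Lam trm | App trm trm | Choice trm trm

fun is_val :: "trm \<Rightarrow> bool" where
  "is_val (Var _) = True"
| "is_val (Lam _) = True"
| "is_val _ = False"

primrec lift :: "nat \<Rightarrow> trm \<Rightarrow> trm" where
  "lift k (Var i) = (if i < k then Var i else Var (Suc i))"
| "lift k (Lam t) = Lam (lift (Suc k) t)"
| "lift k (App t u) = App (lift k t) (lift k u)"
| "lift k (Choice t u) = Choice (lift k t) (lift k u)"

primrec subst :: "trm \<Rightarrow> nat \<Rightarrow> trm \<Rightarrow> trm" where
  "subst (Var i) k s = (if i < k then Var i else if i = k then s else Var (i - 1))"
| "subst (Lam t) k s = Lam (subst t (Suc k) (lift 0 s))"
| "subst (App t u) k s = App (subst t k s) (subst u k s)"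
| "subst (Choice t u) k s = Choice (subst t k s) (subst u k s)"

inductive beta :: "trm \<Rightarrow> trm \<Rightarrow> bool" where
  beta_root: "is_val V \<Longrightarrow> beta (App (Lam M) V) (subst M 0 V)"
| beta_appL: "beta M M' \<Longrightarrow> beta (App M N) (App M' N)"
| beta_appR: "beta N N' \<Longrightarrow> beta (App M N) (App M N')"
| beta_lam: "beta M M' \<Longrightarrow> beta (Lam M) (Lam M')"
| beta_choiceL: "beta M M' \<Longrightarrow> beta (Choice M N) (Choice M' N)"
| beta_choiceR: "beta N N' \<Longrightarrow> beta (Choice M N) (Choice M N')"

inductive beta_w :: "trm \<Rightarrow> trm \<Rightarrow> bool" where
  betaw_root: "is_val V \<Longrightarrow> beta_w (App (Lam M) V) (subst M 0 V)"
| betaw_appL: "beta_w M M' \<Longrightarrow> beta_w (App M N) (App M' N)"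
| betaw_appR: "beta_w N N' \<Longrightarrow> beta_w (App M N) (App M N')"

text \<open>choice_split T A B: T = W[P (+) Q], A = W[P], B = W[Q] for a weak context W\<close>
inductive choice_split :: "trm \<Rightarrow> trm \<Rightarrow> trm \<Rightarrow> bool" where
  cs_root: "choice_split (Choice M N) M N"
| cs_appL: "choice_split M A B \<Longrightarrow> choice_split (App M N) (App A N) (App B N)"
| cs_appR: "choice_split N A B \<Longrightarrow> choice_split (App M N) (App M A) (App M B)"

type_synonym mdist = "(real \<times> trm) multiset"

definition is_mdist :: "mdist \<Rightarrow> bool" where
  "is_mdist m \<longleftrightarrow> (\<forall>(p, M)\<in>#m. 0 < p \<and> p \<le> 1) \<and> sum_mset (image_mset fst m) \<le> 1"

definition scale :: "real \<Rightarrow> mdist \<Rightarrow> mdist" where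
  "scale q m = image_mset (\<lambda>(p, M). (q * p, M)) m"

definition oplus_step :: "trm \<Rightarrow> mdist \<Rightarrow> bool" where
  "oplus_step M m \<longleftrightarrow> (\<exists>A B. choice_split M A B \<and> m = {#(1/2, A), (1/2, B)#})"

definition red :: "trm \<Rightarrow> mdist \<Rightarrow> bool" where
  "red M m \<longleftrightarrow> (\<exists>N. beta M N \<and> m = {#(1, N)#}) \<or> oplus_step M m"

definition sred :: "trm \<Rightarrow> mdist \<Rightarrow> bool" where
  "sred M m \<longleftrightarrow> (\<exists>N. beta_w M N \<and> m = {#(1, N)#}) \<or> oplus_step M m"

definition normal :: "trm \<Rightarrow> bool" where
  "normal M \<longleftrightarrow> \<not> (\<exists>m. red M m)"

definition snormal :: "trm \<Rightarrow> bool" where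
  "snormal M \<longleftrightarrow> \<not> (\<exists>m. sred M m)"

definition wnormal :: "trm \<Rightarrow> bool" where
  "wnormal M \<longleftrightarrow> \<not> (\<exists>N. beta_w M N)"

inductive ured :: "trm \<Rightarrow> trm \<Rightarrow> bool" where
  ured_w: "beta_w M M' \<Longrightarrow> ured M M'"
| ured_lam: "wnormal (Lam P) \<Longrightarrow> ured P P' \<Longrightarrow> ured (Lam P) (Lam P')"
| ured_appL: "wnormal (App P Q) \<Longrightarrow> ured P P' \<Longrightarrow> ured (App P Q) (App P' Q)"
| ured_appR: "wnormal (App P Q) \<Longrightarrow> ured Q Q' \<Longrightarrow> ured (App P Q) (App P Q')"
| ured_choiceL: "wnormal (Choice P Q) \<Longrightarrow> ured P P' \<Longrightarrow> ured (Choice P Q) (Choice P' Q)"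
| ured_choiceR: "wnormal (Choice P Q) \<Longrightarrow> ured Q Q' \<Longrightarrow> ured (Choice P Q) (Choice P Q')"

inductive ered :: "trm \<Rightarrow> mdist \<Rightarrow> bool" where
  ered_s: "\<not> snormal M \<Longrightarrow> sred M m \<Longrightarrow> ered M m"
| ered_u: "snormal M \<Longrightarrow> ured M M' \<Longrightarrow> ered M {#(1, M')#}"

text \<open>lifting ok r: reflexive step [M] => [M] allowed when ok M
  (ok = True: lifting; ok = normal: full lifting). A multi-distribution
  [p_i M_i]_{i in I} is represented by listing its (indexed) elements.\<close>
inductive lifting :: "(trm \<Rightarrow> bool) \<Rightarrow> (trm \<Rightarrow> mdist \<Rightarrow> bool) \<Rightarrow> mdist \<Rightarrow> mdist \<Rightarrow> bool"
  for ok r where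
  lift_refl: "ok M \<Longrightarrow> lifting ok r {#(1, M)#} {#(1, M)#}"
| lift_step: "r M m \<Longrightarrow> lifting ok r {#(1, M)#} m"
| lift_sum: "(\<forall>(p, M, m)\<in>set xs. lifting ok r {#(1, M)#} m) \<Longrightarrow>
     lifting ok r (mset (map (\<lambda>(p, M, m). (p, M)) xs))
                  (sum_list (map (\<lambda>(p, M, m). scale p m) xs))"

definition Rlift :: "mdist \<Rightarrow> mdist \<Rightarrow> bool" where
  "Rlift = lifting (\<lambda>_. True) red"

definition Elift :: "mdist \<Rightarrow> mdist \<Rightarrow> bool" where
  "Elift = lifting normal ered"

definition obs :: "mdist \<Rightarrow> trm \<Rightarrow> real" where
  "obs m N = (if normal N then sum_mset (image_mset fst (filter_mset (\<lambda>x. snd x = N) m)) else 0)"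

definition max_seq :: "(mdist \<Rightarrow> mdist \<Rightarrow> bool) \<Rightarrow> mdist \<Rightarrow> (nat \<Rightarrow> mdist) \<Rightarrow> bool" where
  "max_seq R m s \<longleftrightarrow> s 0 = m \<and>
     (\<forall>n. R (s n) (s (Suc n)) \<or> ((\<not> (\<exists>x. R (s n) x)) \<and> s (Suc n) = s n))"

definition Lim :: "(mdist \<Rightarrow> mdist \<Rightarrow> bool) \<Rightarrow> mdist \<Rightarrow> (trm \<Rightarrow> real) set" where
  "Lim R m = {r. \<exists>s. max_seq R m s \<and> r = (\<lambda>N. SUP n. obs (s n) N)}"

definition obs_rel :: "(mdist \<Rightarrow> mdist \<Rightarrow> bool) \<Rightarrow> mdist \<Rightarrow> (trm \<Rightarrow> real) \<Rightarrow> bool" where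
  "obs_rel R m r \<longleftrightarrow> r \<in> Lim R m"

definition is_greatest :: "(trm \<Rightarrow> real) set \<Rightarrow> (trm \<Rightarrow> real) \<Rightarrow> bool" where
  "is_greatest A r \<longleftrightarrow> r \<in> A \<and> (\<forall>q\<in>A. q \<le> r)"

definition is_maximal :: "(trm \<Rightarrow> real) set \<Rightarrow> (trm \<Rightarrow> real) \<Rightarrow> bool" where
  "is_maximal A r \<longleftrightarrow> r \<in> A \<and> (\<forall>q\<in>A. r \<le> q \<longrightarrow> q = r)"

definition den :: "mdist \<Rightarrow> trm \<Rightarrow> real" where
  "den m = (THE r. is_greatest (Lim Rlift m) r)"

definition obs_normalizing :: "(mdist \<Rightarrow> mdist \<Rightarrow> bool) \<Rightarrow> (mdist \<Rightarrow> mdist \<Rightarrow> bool) \<Rightarrow> bool" where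
  "obs_normalizing R' R \<longleftrightarrow>
     (\<forall>m m'. is_mdist m \<longrightarrow> R' m m' \<longrightarrow> R m m') \<and>
     (\<forall>m q. is_mdist m \<longrightarrow> obs_rel R m q \<longrightarrow> (\<exists>p. obs_rel R' m p \<and> q \<le> p)) \<and>
     (\<forall>m. is_mdist m \<longrightarrow> (\<forall>r\<in>Lim R' m. is_maximal (Lim R' m) r))"

end

theory Submission
  imports Defs
begin

text \<open>
  Let \<open>nf_prob N M\<close> be the probability that the strategy \<open>E\<close> leads from \<open>M\<close> to the normal
  form \<open>N\<close>. It is well defined because two different \<open>E\<close>-steps from the same term can be
  joined by letting every term on both sides make one more \<open>E\<close>-step (so none of them is
  normal): the probability of sitting at \<open>N\<close> after \<open>k\<close> steps does not depend on the steps
  chosen, and every \<open>E\<close>-sequence from \<open>m\<close> observes in the limit the expectation of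
  \<open>nf_prob N\<close> over \<open>m\<close>.

  Conversely, \<open>nf_prob N\<close> is averaged by choice steps and does not increase along parallel
  reduction. The latter rests on factorizing a parallel step into weak \<open>\<beta>\<^sub>v\<close>-steps followed by
  an internal parallel step, which lets every \<open>E\<close>-step of the parallel reduct be simulated
  from the original term. So no step of the lifted reduction increases the expectation of
  \<open>nf_prob N\<close>, which bounds the observation; hence every limit of the lifted reduction lies
  below the one reached by \<open>E\<close>.
\<close>

lemma lift_lift: "i \<le> k \<Longrightarrow> lift (Suc k) (lift i t) = lift i (lift k t)"
  by (induct t arbitrary: i k) auto

lemma lift_subst [simp]: "j \<le> i \<Longrightarrow> lift i (subst t j s) = subst (lift (Suc i) t) j (lift i s)"
  by (induct t arbitrary: i j s) (auto simp: lift_lift)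

lemma lift_subst_ge: "i \<le> j \<Longrightarrow> lift i (subst t j s) = subst (lift i t) (Suc j) (lift i s)"
  by (induct t arbitrary: i j s) (auto simp: lift_lift)

lemma subst_lift [simp]: "subst (lift k t) k s = t"
  by (induct t arbitrary: k s) auto

lemma subst_subst:
  "i \<le> j \<Longrightarrow> subst (subst t (Suc j) (lift i v)) i (subst u j v) = subst (subst t i u) j v"
proof (induct t arbitrary: i j u v)
  case (Lam t)
  have "lift 0 (lift i v) = lift (Suc i) (lift 0 v)" by (simp add: lift_lift)
  moreover have "lift 0 (subst u j v) = subst (lift 0 u) (Suc j) (lift 0 v)" by (simp add: lift_subst_ge)
  ultimately show ?case using Lam by simp
qed auto

lemma subst_0_subst: "subst (subst t (Suc k) (lift 0 s)) 0 (subst v k s) = subst (subst t 0 v) k s"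
  using subst_subst[of 0 k t s v] by simp

lemma is_val_lift [simp]: "is_val (lift k t) = is_val t"
  by (cases t) auto

lemma is_val_subst: "is_val t \<Longrightarrow> is_val s \<Longrightarrow> is_val (subst t k s)"
  by (cases t) auto

section \<open>Parallel reduction and weak factorization\<close>

inductive par :: "trm \<Rightarrow> trm \<Rightarrow> bool" where
  par_var: "par (Var i) (Var i)"
| par_lam: "par M M' \<Longrightarrow> par (Lam M) (Lam M')"
| par_app: "par M M' \<Longrightarrow> par N N' \<Longrightarrow> par (App M N) (App M' N')"
| par_choice: "par M M' \<Longrightarrow> par N N' \<Longrightarrow> par (Choice M N) (Choice M' N')"
| par_beta: "par M M' \<Longrightarrow> par V V' \<Longrightarrow> is_val V \<Longrightarrow> par (App (Lam M) V) (subst M' 0 V')"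

text \<open>Internal parallel reduction contracts no redex in a weak context.\<close>

inductive ipar :: "trm \<Rightarrow> trm \<Rightarrow> bool" where
  ipar_var: "ipar (Var i) (Var i)"
| ipar_lam: "par M M' \<Longrightarrow> ipar (Lam M) (Lam M')"
| ipar_app: "ipar M M' \<Longrightarrow> ipar N N' \<Longrightarrow> ipar (App M N) (App M' N')"
| ipar_choice: "par M M' \<Longrightarrow> par N N' \<Longrightarrow> ipar (Choice M N) (Choice M' N')"

declare par.intros [intro] ipar.intros [intro]

inductive_cases ipar_LamE: "ipar M (Lam X')"
inductive_cases ipar_VarE: "ipar M (Var i)"
inductive_cases ipar_AppE: "ipar M (App A' B')"
inductive_cases ipar_ChoiceE: "ipar M (Choice A' B')"

lemma par_refl [simp]: "par t t"
  by (induct t) auto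

lemma ipar_imp_par: "ipar t u \<Longrightarrow> par t u"
  by (induct rule: ipar.induct) auto

lemma ipar_val_iff: "ipar V V' \<Longrightarrow> is_val V' \<longleftrightarrow> is_val V"
  by (cases rule: ipar.cases) auto

lemma par_lift: "par t u \<Longrightarrow> par (lift k t) (lift k u)"
proof (induct arbitrary: k rule: par.induct)
  case (par_beta M M' V V')
  then have "par (App (Lam (lift (Suc k) M)) (lift k V)) (subst (lift (Suc k) M') 0 (lift k V'))"
    by (intro par.par_beta) auto
  then show ?case by simp
qed auto

lemma par_subst: "par t t' \<Longrightarrow> par s s' \<Longrightarrow> is_val s \<Longrightarrow> par (subst t k s) (subst t' k s')"
proof (induct arbitrary: k s s' rule: par.induct)
  case (par_lam M M')
  moreover have "par (lift 0 s) (lift 0 s')" using par_lam.prems by (simp add: par_lift)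
  ultimately show ?case by auto
next
  case (par_beta M M' V V')
  moreover have "par (lift 0 s) (lift 0 s')" using par_beta.prems by (simp add: par_lift)
  ultimately have "par (App (Lam (subst M (Suc k) (lift 0 s))) (subst V k s))
     (subst (subst M' (Suc k) (lift 0 s')) 0 (subst V' k s'))"
    by (intro par.par_beta) (auto intro: is_val_subst)
  then show ?case by (simp add: subst_0_subst)
qed auto

lemma ipar_subst: "ipar t t' \<Longrightarrow> ipar s s' \<Longrightarrow> is_val s \<Longrightarrow> ipar (subst t k s) (subst t' k s')"
  by (induct arbitrary: k s s' rule: ipar.induct)
    (auto intro!: par_subst par_lift dest: ipar_imp_par)

lemma beta_imp_par: "beta t u \<Longrightarrow> par t u"
  by (induct rule: beta.induct) auto

lemma beta_w_imp_beta: "beta_w t u \<Longrightarrow> beta t u"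
  by (induct rule: beta_w.induct) (auto intro: beta.intros)

lemma beta_w_subst: "beta_w t u \<Longrightarrow> is_val s \<Longrightarrow> beta_w (subst t k s) (subst u k s)"
proof (induct arbitrary: k rule: beta_w.induct)
  case (betaw_root V M)
  then have "beta_w (App (Lam (subst M (Suc k) (lift 0 s))) (subst V k s))
     (subst (subst M (Suc k) (lift 0 s)) 0 (subst V k s))"
    by (intro beta_w.betaw_root) (auto intro: is_val_subst)
  then show ?case by (simp add: subst_0_subst)
qed (auto intro: beta_w.intros)

lemma beta_w_val: "beta_w V X \<Longrightarrow> \<not> is_val V"
  by (cases rule: beta_w.cases) auto

lemma rtranclp_beta_w_appL: "beta_w\<^sup>*\<^sup>* M M' \<Longrightarrow> beta_w\<^sup>*\<^sup>* (App M N) (App M' N)"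
  by (induct rule: rtranclp_induct) (auto intro: rtranclp.rtrancl_into_rtrancl beta_w.intros)

lemma rtranclp_beta_w_appR: "beta_w\<^sup>*\<^sup>* N N' \<Longrightarrow> beta_w\<^sup>*\<^sup>* (App M N) (App M N')"
  by (induct rule: rtranclp_induct) (auto intro: rtranclp.rtrancl_into_rtrancl beta_w.intros)

lemma rtranclp_beta_w_subst: "beta_w\<^sup>*\<^sup>* t u \<Longrightarrow> is_val s \<Longrightarrow> beta_w\<^sup>*\<^sup>* (subst t k s) (subst u k s)"
  by (induct rule: rtranclp_induct) (auto intro: rtranclp.rtrancl_into_rtrancl beta_w_subst)

lemma rtranclp_beta_w_val: "beta_w\<^sup>*\<^sup>* V X \<Longrightarrow> is_val V \<Longrightarrow> X = V"
  by (induct rule: rtranclp_induct) (auto dest: beta_w_val)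

lemma par_factorization: "par M M' \<Longrightarrow> \<exists>M0. beta_w\<^sup>*\<^sup>* M M0 \<and> ipar M0 M'"
proof (induct rule: par.induct)
  case (par_app M M' N N')
  then obtain M0 N0 where "beta_w\<^sup>*\<^sup>* M M0" "ipar M0 M'" "beta_w\<^sup>*\<^sup>* N N0" "ipar N0 N'" by blast
  then show ?case
    by (intro exI[of _ "App M0 N0"]) (auto intro: rtranclp_trans rtranclp_beta_w_appL rtranclp_beta_w_appR)
next
  case (par_beta M M' V V')
  then obtain M0 where M0: "beta_w\<^sup>*\<^sup>* M M0" "ipar M0 M'" by blast
  from par_beta obtain V0 where "beta_w\<^sup>*\<^sup>* V V0" "ipar V0 V'" by blast
  with par_beta have "ipar V V'" using rtranclp_beta_w_val by blast
  have "beta_w (App (Lam M) V) (subst M 0 V)" using par_beta by (auto intro: beta_w.intros)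
  moreover have "beta_w\<^sup>*\<^sup>* (subst M 0 V) (subst M0 0 V)"
    using rtranclp_beta_w_subst M0(1) par_beta by blast
  moreover have "ipar (subst M0 0 V) (subst M' 0 V')"
    using ipar_subst M0(2) \<open>ipar V V'\<close> par_beta by blast
  ultimately show ?case by (meson converse_rtranclp_into_rtranclp)
qed auto

lemma ipar_beta_w_swap: "beta_w M' M'' \<Longrightarrow> ipar M0 M' \<Longrightarrow> \<exists>N. beta_w M0 N \<and> par N M''"
proof (induct arbitrary: M0 rule: beta_w.induct)
  case (betaw_root V M)
  then obtain X B where "M0 = App (Lam X) B" "par X M" "ipar B V"
    by (auto elim!: ipar_AppE ipar_LamE)
  moreover have "is_val B" using \<open>ipar B V\<close> betaw_root(1) ipar_val_iff by blast
  ultimately show ?case by (blast intro: beta_w.intros par_subst ipar_imp_par)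
qed (blast elim!: ipar_AppE intro: beta_w.intros ipar_imp_par)+

definition splittable :: "trm \<Rightarrow> bool" where
  "splittable M \<longleftrightarrow> (\<exists>A B. choice_split M A B)"

definition beta_normal :: "trm \<Rightarrow> bool" where
  "beta_normal M \<longleftrightarrow> \<not> (\<exists>N. beta M N)"

inductive_simps beta_w_App_iff: "beta_w (App M N) X"
inductive_simps choice_split_App_iff: "choice_split (App M N) A B"

lemma wnormal_Lam [simp]: "wnormal (Lam P)"
  and wnormal_Choice [simp]: "wnormal (Choice P Q)"
  unfolding wnormal_def by (auto elim: beta_w.cases)

lemma wnormal_App_iff:
  "wnormal (App P Q) \<longleftrightarrow> wnormal P \<and> wnormal Q \<and> \<not> ((\<exists>X. P = Lam X) \<and> is_val Q)"
  unfolding wnormal_def by (auto simp: beta_w_App_iff)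

lemma splittable_Var [simp]: "\<not> splittable (Var i)"
  and splittable_Lam [simp]: "\<not> splittable (Lam P)"
  unfolding splittable_def by (auto elim: choice_split.cases)

lemma splittable_Choice [simp]: "splittable (Choice P Q)"
  unfolding splittable_def by (blast intro: cs_root)

lemma splittable_App [simp]: "splittable (App P Q) \<longleftrightarrow> splittable P \<or> splittable Q"
  unfolding splittable_def choice_split_App_iff by blast

lemma snormal_iff: "snormal M \<longleftrightarrow> wnormal M \<and> \<not> splittable M"
  unfolding snormal_def wnormal_def splittable_def sred_def oplus_step_def by blast

lemma normal_iff: "normal M \<longleftrightarrow> beta_normal M \<and> \<not> splittable M"
  unfolding normal_def beta_normal_def splittable_def red_def oplus_step_def by blast

lemma beta_w_not_wnormal: "beta_w M N \<Longrightarrow> \<not> wnormal M"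
  unfolding wnormal_def by blast

lemma val_not_splittable: "is_val V \<Longrightarrow> \<not> splittable V"
  by (cases V) auto

lemma beta_normal_imp_wnormal: "beta_normal M \<Longrightarrow> wnormal M"
  unfolding beta_normal_def wnormal_def using beta_w_imp_beta by blast

lemma beta_wnormal_Lam: "beta P (Lam X') \<Longrightarrow> wnormal P \<Longrightarrow> \<exists>X. P = Lam X"
  by (cases rule: beta.cases) (auto simp: wnormal_App_iff)

lemma beta_wnormal_val: "beta Q Q' \<Longrightarrow> is_val Q' \<Longrightarrow> wnormal Q \<Longrightarrow> is_val Q"
  by (cases rule: beta.cases) (auto simp: wnormal_App_iff)

lemma wnormal_beta: "beta M M' \<Longrightarrow> wnormal M \<Longrightarrow> wnormal M'"
  by (induct rule: beta.induct) (auto simp: wnormal_App_iff dest: beta_wnormal_Lam beta_wnormal_val)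

lemma splittable_beta_reflect: "beta M M' \<Longrightarrow> wnormal M \<Longrightarrow> splittable M' \<Longrightarrow> splittable M"
  by (induct rule: beta.induct) (auto simp: wnormal_App_iff)

lemma snormal_beta: "beta M M' \<Longrightarrow> snormal M \<Longrightarrow> snormal M'"
  using wnormal_beta splittable_beta_reflect snormal_iff by blast

lemma splittable_par: "par M M' \<Longrightarrow> splittable M \<Longrightarrow> splittable M'"
  by (induct rule: par.induct) (auto dest: val_not_splittable)

lemma splittable_rtranclp_beta: "beta\<^sup>*\<^sup>* M M' \<Longrightarrow> splittable M \<Longrightarrow> splittable M'"
  by (induct rule: rtranclp_induct) (auto dest: beta_imp_par splittable_par)

lemma ipar_wnormal: "ipar M0 M' \<Longrightarrow> wnormal M' \<Longrightarrow> wnormal M0"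
  by (induct rule: ipar.induct) (auto simp: wnormal_App_iff elim: ipar.cases)

lemma ipar_choice_split: "choice_split M' A' B' \<Longrightarrow> ipar M0 M' \<Longrightarrow>
   \<exists>A B. choice_split M0 A B \<and> par A A' \<and> par B B'"
  by (induct arbitrary: M0 rule: choice_split.induct)
    (fastforce elim!: ipar_ChoiceE ipar_AppE intro: choice_split.intros ipar_imp_par)+

lemma ured_imp_beta: "ured M M' \<Longrightarrow> beta M M'"
  by (induct rule: ured.induct) (auto intro: beta.intros beta_w_imp_beta)

lemma ured_wnormal: "ured M M' \<Longrightarrow> wnormal M \<Longrightarrow> wnormal M'"
  using ured_imp_beta wnormal_beta by blast

lemma ured_not_wnormal: "ured M M' \<Longrightarrow> \<not> wnormal M \<Longrightarrow> beta_w M M'"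
  by (cases rule: ured.cases) auto

lemma beta_imp_ex_ured: "beta M N \<Longrightarrow> \<exists>N'. ured M N'"
proof (induct rule: beta.induct)
  case (beta_appL M M' N)
  then show ?case using ured.ured_appL ured.ured_w unfolding wnormal_def by blast
next
  case (beta_appR N N' M)
  then show ?case using ured.ured_appR ured.ured_w unfolding wnormal_def by blast
qed (blast intro: ured.intros beta_w.intros wnormal_Lam wnormal_Choice)+

lemma ured_Lam_iff: "ured (Lam P) X \<longleftrightarrow> (\<exists>P'. X = Lam P' \<and> ured P P')"
  by (subst ured.simps) (auto dest: beta_w_not_wnormal)

lemma ured_Choice_iff:
  "ured (Choice P Q) X \<longleftrightarrow> (\<exists>P'. X = Choice P' Q \<and> ured P P') \<or> (\<exists>Q'. X = Choice P Q' \<and> ured Q Q')"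
  by (subst ured.simps) (auto dest: beta_w_not_wnormal)

lemma ured_App_wnormal_iff: "wnormal (App P Q) \<Longrightarrow>
  ured (App P Q) X \<longleftrightarrow> (\<exists>P'. X = App P' Q \<and> ured P P') \<or> (\<exists>Q'. X = App P Q' \<and> ured Q Q')"
  by (subst ured.simps) (auto dest: beta_w_not_wnormal)

lemma ured_appL_wnormal: "wnormal (App P Q) \<Longrightarrow> ured P P' \<Longrightarrow> wnormal (App P' Q)"
  using ured_wnormal ured.ured_appL by blast

lemma ured_appR_wnormal: "wnormal (App P Q) \<Longrightarrow> ured Q Q' \<Longrightarrow> wnormal (App P Q')"
  using ured_wnormal ured.ured_appR by blast

lemma rtranclp_ured_wnormal: "ured\<^sup>*\<^sup>* M M' \<Longrightarrow> wnormal M \<Longrightarrow> wnormal M'"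
  by (induct rule: rtranclp_induct) (auto intro: ured_wnormal)

lemma rtranclp_ured_lam: "ured\<^sup>*\<^sup>* P P' \<Longrightarrow> ured\<^sup>*\<^sup>* (Lam P) (Lam P')"
  by (induct rule: rtranclp_induct) (auto intro: rtranclp.rtrancl_into_rtrancl ured.ured_lam[OF wnormal_Lam])

lemma rtranclp_ured_choiceL: "ured\<^sup>*\<^sup>* P P' \<Longrightarrow> ured\<^sup>*\<^sup>* (Choice P Q) (Choice P' Q)"
  by (induct rule: rtranclp_induct) (auto intro: rtranclp.rtrancl_into_rtrancl ured.ured_choiceL[OF wnormal_Choice])

lemma rtranclp_ured_choiceR: "ured\<^sup>*\<^sup>* Q Q' \<Longrightarrow> ured\<^sup>*\<^sup>* (Choice P Q) (Choice P Q')"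
  by (induct rule: rtranclp_induct) (auto intro: rtranclp.rtrancl_into_rtrancl ured.ured_choiceR[OF wnormal_Choice])

lemma rtranclp_ured_appL:
  "ured\<^sup>*\<^sup>* P P' \<Longrightarrow> wnormal (App P Q) \<Longrightarrow> ured\<^sup>*\<^sup>* (App P Q) (App P' Q)"
proof (induct rule: rtranclp_induct)
  case (step P1 P2)
  then have "wnormal (App P1 Q)" using rtranclp_ured_wnormal by blast
  with step show ?case by (auto intro: rtranclp.rtrancl_into_rtrancl ured.ured_appL)
qed simp

lemma rtranclp_ured_appR:
  "ured\<^sup>*\<^sup>* Q Q' \<Longrightarrow> wnormal (App P Q) \<Longrightarrow> ured\<^sup>*\<^sup>* (App P Q) (App P Q')"
proof (induct rule: rtranclp_induct)
  case (step Q1 Q2)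
  then have "wnormal (App P Q1)" using rtranclp_ured_wnormal by blast
  with step show ?case by (auto intro: rtranclp.rtrancl_into_rtrancl ured.ured_appR)
qed simp

lemma rtranclp_beta_w_imp_ured: "beta_w\<^sup>*\<^sup>* M N \<Longrightarrow> ured\<^sup>*\<^sup>* M N"
  by (induct rule: rtranclp_induct) (auto intro: rtranclp.rtrancl_into_rtrancl ured.ured_w)

lemma rtranclp_ured_imp_beta: "ured\<^sup>*\<^sup>* M N \<Longrightarrow> beta\<^sup>*\<^sup>* M N"
  by (induct rule: rtranclp_induct) (auto intro: rtranclp.rtrancl_into_rtrancl ured_imp_beta)

lemma beta_normal_subterms:
  "beta_normal (Lam P) \<Longrightarrow> beta_normal P"
  "beta_normal (App P Q) \<Longrightarrow> beta_normal P \<and> beta_normal Q"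
  "beta_normal (Choice P Q) \<Longrightarrow> beta_normal P \<and> beta_normal Q"
  unfolding beta_normal_def by (blast intro: beta.intros)+

lemma par_beta_normal_imp_rtranclp_ured: "par X Y \<Longrightarrow> beta_normal Y \<Longrightarrow> ured\<^sup>*\<^sup>* X Y"
proof (induct Y arbitrary: X)
  case (Var i)
  then show ?case
    by (metis ipar_VarE par_factorization rtranclp_beta_w_imp_ured)
next
  case (Lam P')
  obtain X0 where X0: "beta_w\<^sup>*\<^sup>* X X0" "ipar X0 (Lam P')" using par_factorization Lam by blast
  then obtain P where "X0 = Lam P" "par P P'" by (auto elim: ipar_LamE)
  then have "ured\<^sup>*\<^sup>* X0 (Lam P')" using Lam beta_normal_subterms(1) rtranclp_ured_lam by blast
  then show ?case using X0 rtranclp_beta_w_imp_ured by (blast intro: rtranclp_trans)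
next
  case (App P' Q')
  obtain X0 where X0: "beta_w\<^sup>*\<^sup>* X X0" "ipar X0 (App P' Q')" using par_factorization App by blast
  then obtain P Q where PQ: "X0 = App P Q" "ipar P P'" "ipar Q Q'" by (auto elim: ipar_AppE)
  have "ured\<^sup>*\<^sup>* P P'" "ured\<^sup>*\<^sup>* Q Q'"
    using App beta_normal_subterms(2) PQ ipar_imp_par by blast+
  moreover have "wnormal (App P Q)"
    using ipar_wnormal X0(2) PQ(1) beta_normal_imp_wnormal App.prems(2) by blast
  ultimately have "ured\<^sup>*\<^sup>* X0 (App P' Q)" "wnormal (App P' Q)"
    using PQ(1) rtranclp_ured_appL rtranclp_ured_wnormal by blast+
  with \<open>ured\<^sup>*\<^sup>* Q Q'\<close> have "ured\<^sup>*\<^sup>* X0 (App P' Q')"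
    by (blast intro: rtranclp_trans rtranclp_ured_appR)
  then show ?case using X0 rtranclp_beta_w_imp_ured by (blast intro: rtranclp_trans)
next
  case (Choice P' Q')
  obtain X0 where X0: "beta_w\<^sup>*\<^sup>* X X0" "ipar X0 (Choice P' Q')" using par_factorization Choice by blast
  then obtain P Q where PQ: "X0 = Choice P Q" "par P P'" "par Q Q'" by (auto elim: ipar_ChoiceE)
  have "ured\<^sup>*\<^sup>* P P'" "ured\<^sup>*\<^sup>* Q Q'" using Choice beta_normal_subterms(3) PQ by blast+
  then have "ured\<^sup>*\<^sup>* X0 (Choice P' Q')"
    using PQ(1) rtranclp_ured_choiceL rtranclp_ured_choiceR by (blast intro: rtranclp_trans)
  then show ?case using X0 rtranclp_beta_w_imp_ured by (blast intro: rtranclp_trans)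
qed

lemma par_swap_if_ipar_swap:
  assumes "\<And>M0. ipar M0 M' \<Longrightarrow> \<exists>N. ured\<^sup>*\<^sup>* M0 N \<and> par N M''" and "par M M'"
  shows "\<exists>N. ured\<^sup>*\<^sup>* M N \<and> par N M''"
proof -
  obtain M0 where "beta_w\<^sup>*\<^sup>* M M0" "ipar M0 M'" using par_factorization assms(2) by blast
  then show ?thesis using assms(1) rtranclp_beta_w_imp_ured by (blast intro: rtranclp_trans)
qed

lemma par_ured_swap: "ured M' M'' \<Longrightarrow> par M M' \<Longrightarrow> \<exists>N. ured\<^sup>*\<^sup>* M N \<and> par N M''"
proof (induct arbitrary: M rule: ured.induct)
  case (ured_w M' M'')
  show ?case
    by (rule par_swap_if_ipar_swap[OF _ ured_w.prems])
      (use ured_w ipar_beta_w_swap in \<open>blast intro: ured.ured_w\<close>)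
next
  case (ured_lam P' P'')
  show ?case
    by (rule par_swap_if_ipar_swap[OF _ ured_lam.prems])
      (blast elim!: ipar_LamE dest: ured_lam.hyps(3) intro: rtranclp_ured_lam)
next
  case (ured_appL P' Q' P'')
  show ?case
  proof (rule par_swap_if_ipar_swap[OF _ ured_appL.prems])
    fix M0 assume "ipar M0 (App P' Q')"
    then obtain P Q where PQ: "M0 = App P Q" "ipar P P'" "ipar Q Q'" by (auto elim: ipar_AppE)
    have "wnormal (App P Q)" using ipar_wnormal \<open>ipar M0 (App P' Q')\<close> PQ(1) ured_appL.hyps(1) by blast
    moreover obtain N0 where "ured\<^sup>*\<^sup>* P N0" "par N0 P''" using ured_appL.hyps(3) PQ(2) ipar_imp_par by blast
    ultimately show "\<exists>N. ured\<^sup>*\<^sup>* M0 N \<and> par N (App P'' Q')"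
      using PQ rtranclp_ured_appL ipar_imp_par by blast
  qed
next
  case (ured_appR P' Q' Q'')
  show ?case
  proof (rule par_swap_if_ipar_swap[OF _ ured_appR.prems])
    fix M0 assume "ipar M0 (App P' Q')"
    then obtain P Q where PQ: "M0 = App P Q" "ipar P P'" "ipar Q Q'" by (auto elim: ipar_AppE)
    have "wnormal (App P Q)" using ipar_wnormal \<open>ipar M0 (App P' Q')\<close> PQ(1) ured_appR.hyps(1) by blast
    moreover obtain N0 where "ured\<^sup>*\<^sup>* Q N0" "par N0 Q''" using ured_appR.hyps(3) PQ(3) ipar_imp_par by blast
    ultimately show "\<exists>N. ured\<^sup>*\<^sup>* M0 N \<and> par N (App P' Q'')"
      using PQ rtranclp_ured_appR ipar_imp_par by blast
  qed
next
  case (ured_choiceL P' Q' P'')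
  show ?case
    by (rule par_swap_if_ipar_swap[OF _ ured_choiceL.prems])
      (blast elim!: ipar_ChoiceE dest: ured_choiceL.hyps(3) intro: rtranclp_ured_choiceL)
next
  case (ured_choiceR P' Q' Q'')
  show ?case
    by (rule par_swap_if_ipar_swap[OF _ ured_choiceR.prems])
      (blast elim!: ipar_ChoiceE dest: ured_choiceR.hyps(3) intro: rtranclp_ured_choiceR)
qed

section \<open>Local confluence\<close>

lemma beta_w_diamond:
  "beta_w M M1 \<Longrightarrow> beta_w M M2 \<Longrightarrow> M1 = M2 \<or> (\<exists>P. beta_w M1 P \<and> beta_w M2 P)"
proof (induct arbitrary: M2 rule: beta_w.induct)
  case (betaw_root V M)
  then show ?case by (auto simp: beta_w_App_iff dest: beta_w_val elim: beta_w.cases)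
next
  case (betaw_appL M M' N)
  then show ?case by (auto simp: beta_w_App_iff intro: beta_w.intros dest: beta_w_val elim: beta_w.cases)
next
  case (betaw_appR N N' M)
  then show ?case by (auto simp: beta_w_App_iff intro: beta_w.intros dest: beta_w_val elim: beta_w.cases)
qed

lemma ured_diamond: "ured M M1 \<Longrightarrow> ured M M2 \<Longrightarrow> M1 = M2 \<or> (\<exists>P. ured M1 P \<and> ured M2 P)"
proof (induct M arbitrary: M1 M2)
  case (Var i)
  then show ?case by (auto elim: ured.cases beta_w.cases)
next
  case (Lam P)
  then show ?case by (auto simp: ured_Lam_iff) (metis ured_Lam_iff)
next
  case (Choice P Q)
  then show ?case by (auto simp: ured_Choice_iff) (metis ured_Choice_iff)+
next
  case (App P Q)
  show ?case
  proof (cases "wnormal (App P Q)")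
    case False
    then show ?thesis using App.prems beta_w_diamond ured_not_wnormal by (metis ured.ured_w)
  next
    case True
    note wP = ured_appL_wnormal[OF True] and wQ = ured_appR_wnormal[OF True]
    from App.prems True consider
        (left_left) P1 P2 where "M1 = App P1 Q" "M2 = App P2 Q" "ured P P1" "ured P P2"
      | (left_right) P1 Q2 where "M1 = App P1 Q" "M2 = App P Q2" "ured P P1" "ured Q Q2"
      | (right_left) Q1 P2 where "M1 = App P Q1" "M2 = App P2 Q" "ured Q Q1" "ured P P2"
      | (right_right) Q1 Q2 where "M1 = App P Q1" "M2 = App P Q2" "ured Q Q1" "ured Q Q2"
      by (auto simp: ured_App_wnormal_iff)
    then show ?thesis
    proof cases
      case left_left
      then show ?thesis using App.hyps(1)[of P1 P2] wP by (blast intro: ured.ured_appL)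
    next
      case left_right
      then show ?thesis using wP wQ by (blast intro: ured.ured_appL ured.ured_appR)
    next
      case right_left
      then show ?thesis using wP wQ by (blast intro: ured.ured_appL ured.ured_appR)
    next
      case right_right
      then show ?thesis using App.hyps(2)[of Q1 Q2] wQ by (blast intro: ured.ured_appR)
    qed
  qed
qed

lemma choice_split_val: "choice_split V A B \<Longrightarrow> \<not> is_val V"
  by (cases rule: choice_split.cases) auto

lemma beta_w_choice_split_commute:
  "beta_w M N \<Longrightarrow> choice_split M A B \<Longrightarrow>
    \<exists>A' B'. choice_split N A' B' \<and> beta_w A A' \<and> beta_w B B'"
proof (induct arbitrary: A B rule: beta_w.induct)
  case (betaw_root V M)
  then show ?case by (auto simp: choice_split_App_iff dest: choice_split_val)
next
  case (betaw_appL M M' N)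
  from betaw_appL.prems show ?case
  proof (cases rule: choice_split.cases)
    case (cs_appL A1 B1)
    then show ?thesis using betaw_appL.hyps(2) by (blast intro: choice_split.intros beta_w.intros)
  next
    case (cs_appR A1 B1)
    then show ?thesis using betaw_appL.hyps(1) by (blast intro: choice_split.intros beta_w.intros)
  qed
next
  case (betaw_appR N N' M)
  from betaw_appR.prems show ?case
  proof (cases rule: choice_split.cases)
    case (cs_appL A1 B1)
    then show ?thesis using betaw_appR.hyps(1) by (blast intro: choice_split.intros beta_w.intros)
  next
    case (cs_appR A1 B1)
    then show ?thesis using betaw_appR.hyps(2) by (blast intro: choice_split.intros beta_w.intros)
  qed
qed

lemma choice_split_diamond:
  "choice_split M A1 B1 \<Longrightarrow> choice_split M A2 B2 \<Longrightarrow> (A1 = A2 \<and> B1 = B2) \<or>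
    (\<exists>X Y Z W. choice_split A1 X Y \<and> choice_split B1 Z W \<and> choice_split A2 X Z \<and> choice_split B2 Y W)"
proof (induct arbitrary: A2 B2 rule: choice_split.induct)
  case (cs_root M N)
  then show ?case by (cases rule: choice_split.cases) auto
next
  case (cs_appL M A B N)
  from cs_appL.prems show ?case
  proof (cases rule: choice_split.cases)
    case (cs_appL A' B')
    then show ?thesis using cs_appL.hyps(2)[of A' B'] by (blast intro: choice_split.intros)
  next
    case (cs_appR A' B')
    then show ?thesis using cs_appL.hyps(1) by (blast intro: choice_split.intros)
  qed
next
  case (cs_appR N A B M)
  from cs_appR.prems show ?case
  proof (cases rule: choice_split.cases)
    case (cs_appL A' B')
    then show ?thesis using cs_appR.hyps(1) by (blast intro: choice_split.intros)
  next
    case (cs_appR A' B')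
    then show ?thesis using cs_appR.hyps(2)[of A' B'] by (blast intro: choice_split.intros)
  qed
qed

definition expect :: "mdist \<Rightarrow> (trm \<Rightarrow> real) \<Rightarrow> real" where
  "expect m f = (\<Sum>(p, M)\<in>#m. p * f M)"

definition weights_pos :: "mdist \<Rightarrow> bool" where
  "weights_pos m \<longleftrightarrow> (\<forall>(p, M)\<in>#m. 0 < p)"

lemma expect_empty [simp]: "expect {#} f = 0"
  and expect_add_mset [simp]: "expect (add_mset (p, M) m) f = p * f M + expect m f"
  and expect_union [simp]: "expect (m + m') f = expect m f + expect m' f"
  by (simp_all add: expect_def)

lemma expect_scale [simp]: "expect (scale q m) f = q * expect m f"
  by (induct m) (auto simp: scale_def expect_def algebra_simps)

lemma weights_pos_simps [simp]:
  "weights_pos {#}"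
  "weights_pos (add_mset (p, M) m) \<longleftrightarrow> 0 < p \<and> weights_pos m"
  by (auto simp: weights_pos_def)

lemma weights_pos_union [simp]: "weights_pos (m + m') \<longleftrightarrow> weights_pos m \<and> weights_pos m'"
  by (auto simp: weights_pos_def)

lemma expect_mono: "weights_pos m \<Longrightarrow> (\<And>M. f M \<le> g M) \<Longrightarrow> expect m f \<le> expect m g"
  by (induct m) (auto intro!: add_mono mult_left_mono)

lemma scale_1 [simp]: "scale 1 m = m"
  by (simp add: scale_def)

lemma lifting_single_cases:
  "lifting ok r {#(1, M)#} m \<Longrightarrow> (ok M \<and> m = {#(1, M)#}) \<or> r M m"
proof (induct "{#(1::real, M)#}" m rule: lifting.induct)
  case (lift_sum xs)
  then obtain m0 where "xs = [(1, M, m0)]"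
    by (cases xs) (auto simp: add_mset_eq_single)
  with lift_sum show ?case by simp
qed auto

lemma lifting_decompose:
  assumes "lifting ok r m m'"
  obtains xs where "m = mset (map (\<lambda>(p, M, _). (p, M)) xs)" "m' = (\<Sum>(p, _, m'')\<leftarrow>xs. scale p m'')"
    and "\<And>p M m''. (p, M, m'') \<in> set xs \<Longrightarrow> (ok M \<and> m'' = {#(1, M)#}) \<or> r M m''"
  using assms
proof (cases rule: lifting.cases)
  case (lift_refl M)
  then show ?thesis using that[of "[(1, M, {#(1, M)#})]"] by simp
next
  case (lift_step M)
  then show ?thesis using that[of "[(1, M, m')]"] by simp
next
  case (lift_sum xs)
  then show ?thesis using that[of xs] lifting_single_cases by fastforce
qed

lemma expect_sum_list_scale:
  "expect (\<Sum>(p, _, m'')\<leftarrow>xs. scale p m'') f = (\<Sum>(p, _, m'')\<leftarrow>xs. p * expect m'' f)"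
  by (induct xs) auto

lemma expect_mset_map:
  "expect (mset (map (\<lambda>(p, M, _). (p, M)) xs)) g = (\<Sum>(p, M, _)\<leftarrow>xs. p * g M)"
  by (induct xs) auto

lemma lifting_expect_eq:
  assumes "lifting ok r m m'"
    and "\<And>M. ok M \<Longrightarrow> f M = g M" "\<And>M m''. r M m'' \<Longrightarrow> expect m'' f = g M"
  shows "expect m' f = expect m g"
proof -
  obtain xs where xs: "m = mset (map (\<lambda>(p, M, _). (p, M)) xs)" "m' = (\<Sum>(p, _, m'')\<leftarrow>xs. scale p m'')"
    and steps: "\<And>p M m''. (p, M, m'') \<in> set xs \<Longrightarrow> (ok M \<and> m'' = {#(1, M)#}) \<or> r M m''"
    using lifting_decompose[OF assms(1)] by blast
  have "(\<Sum>(p, _, m'')\<leftarrow>xs. p * expect m'' f) = (\<Sum>(p, M, _)\<leftarrow>xs. p * g M)"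
    using steps assms(2,3) by (intro arg_cong[where f = sum_list] map_cong) fastforce+
  then show ?thesis unfolding xs expect_sum_list_scale expect_mset_map .
qed

lemma lifting_expect_le:
  assumes "lifting ok r m m'" "weights_pos m"
    and "\<And>M. ok M \<Longrightarrow> f M \<le> g M" "\<And>M m''. r M m'' \<Longrightarrow> expect m'' f \<le> g M"
  shows "expect m' f \<le> expect m g"
proof -
  obtain xs where xs: "m = mset (map (\<lambda>(p, M, _). (p, M)) xs)" "m' = (\<Sum>(p, _, m'')\<leftarrow>xs. scale p m'')"
    and steps: "\<And>p M m''. (p, M, m'') \<in> set xs \<Longrightarrow> (ok M \<and> m'' = {#(1, M)#}) \<or> r M m''"
    using lifting_decompose[OF assms(1)] by blast
  have "(\<Sum>(p, _, m'')\<leftarrow>xs. p * expect m'' f) \<le> (\<Sum>(p, M, _)\<leftarrow>xs. p * g M)"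
  proof (rule sum_list_mono, clarify)
    fix p M m'' assume x: "(p, M, m'') \<in> set xs"
    then have "0 < p" using assms(2) xs(1) by (force simp: weights_pos_def)
    moreover have "expect m'' f \<le> g M" using steps[OF x] assms(3,4) by auto
    ultimately show "p * expect m'' f \<le> p * g M" by simp
  qed
  then show ?thesis unfolding xs expect_sum_list_scale expect_mset_map .
qed

lemma lifting_weights_pos:
  assumes "lifting ok r m m'" "weights_pos m" "\<And>M m''. r M m'' \<Longrightarrow> weights_pos m''"
  shows "weights_pos m'"
proof -
  obtain xs where xs: "m = mset (map (\<lambda>(p, M, _). (p, M)) xs)" "m' = (\<Sum>(p, _, m'')\<leftarrow>xs. scale p m'')"
    and steps: "\<And>p M m''. (p, M, m'') \<in> set xs \<Longrightarrow> (ok M \<and> m'' = {#(1, M)#}) \<or> r M m''"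
    using lifting_decompose[OF assms(1)] by blast
  have "\<forall>(p, M, m'')\<in>set xs. weights_pos (scale p m'')"
  proof clarify
    fix p M m'' assume that: "(p, M, m'') \<in> set xs"
    have "0 < p" using that assms(2) xs(1) by (force simp: weights_pos_def)
    moreover have "weights_pos m''" using steps[OF that] assms(3) by auto
    ultimately show "weights_pos (scale p m'')" by (auto simp: weights_pos_def scale_def)
  qed
  then show ?thesis unfolding xs(2) by (induct xs) auto
qed

lemma lifting_mono:
  assumes "lifting ok r m m'" "\<And>M. ok M \<Longrightarrow> ok' M" "\<And>M m''. r M m'' \<Longrightarrow> r' M m''"
  shows "lifting ok' r' m m'"
  using assms(1)
proof (induct rule: lifting.induct)
  case (lift_refl M)
  then show ?case by (simp add: assms(2) lifting.lift_refl)
next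
  case (lift_step M m)
  then show ?case by (simp add: assms(3) lifting.lift_step)
next
  case (lift_sum xs)
  then show ?case by (intro lifting.lift_sum) auto
qed

lemma lifting_mset:
  assumes "\<And>M. lifting ok r {#(1, M)#} (F M)"
  shows "lifting ok r (mset xs) (\<Sum>(p, M)\<leftarrow>xs. scale p (F M))"
proof -
  have lifted: "lifting ok r (mset (map (\<lambda>(p, M, _). (p, M)) (map (\<lambda>(p, M). (p, M, F M)) xs)))
     (\<Sum>(p, _, m)\<leftarrow>map (\<lambda>(p, M). (p, M, F M)) xs. scale p m)"
    by (rule lift_sum) (auto simp: assms)
  have weights: "map (\<lambda>(p, M, _). (p, M)) (map (\<lambda>(p, M). (p, M, F M)) xs) = xs"
    by (induct xs) auto
  have results:
    "map (\<lambda>(p, _, m). scale p m) (map (\<lambda>(p, M). (p, M, F M)) xs) = map (\<lambda>(p, M). scale p (F M)) xs"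
    by (induct xs) auto
  show ?thesis using lifted unfolding weights results .
qed

lemma lifting_refl: "lifting (\<lambda>_. True) r m m"
proof -
  obtain xs where "mset xs = m" using ex_mset by blast
  moreover have "(\<Sum>(p, M)\<leftarrow>xs. scale p {#(1, M)#}) = mset xs"
    by (induct xs) (auto simp: scale_def)
  ultimately show ?thesis using lifting_mset[of "\<lambda>_. True" r "\<lambda>M. {#(1, M)#}" xs]
    by (simp add: lift_refl)
qed

lemma lifting_total:
  assumes "\<And>M. \<not> ok M \<Longrightarrow> \<exists>m''. r M m''"
  shows "\<exists>m'. lifting ok r m m'"
proof -
  have "\<exists>m''. lifting ok r {#(1, M)#} m''" for M
  proof (cases "ok M")
    case True
    then show ?thesis by (blast intro: lift_refl)
  next
    case False
    then show ?thesis using assms by (blast intro: lift_step)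
  qed
  then obtain F where "\<And>M. lifting ok r {#(1, M)#} (F M)" by metis
  moreover obtain xs where "mset xs = m" using ex_mset by blast
  ultimately show ?thesis using lifting_mset[of ok r F xs] by blast
qed

lemma lifting_pair:
  assumes "lifting ok r {#(1, A)#} mA" "lifting ok r {#(1, B)#} mB"
  shows "lifting ok r {#(p, A), (q, B)#} (scale p mA + scale q mB)"
proof -
  have "lifting ok r (mset (map (\<lambda>(p, M, _). (p, M)) [(p, A, mA), (q, B, mB)]))
      (\<Sum>(p, _, m)\<leftarrow>[(p, A, mA), (q, B, mB)]. scale p m)"
    by (rule lift_sum) (use assms in auto)
  then show ?thesis by (simp add: add_mset_commute)
qed

lemma strict_lifting_reduces:
  assumes "lifting (\<lambda>_. False) r m m'" "(p, M) \<in># m"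
  shows "\<exists>m''. r M m''"
proof -
  obtain xs where "m = mset (map (\<lambda>(p, M, _). (p, M)) xs)"
    and "\<And>p M m''. (p, M, m'') \<in> set xs \<Longrightarrow> r M m''"
    using lifting_decompose[OF assms(1)] by metis
  with assms(2) show ?thesis by auto
qed

lemma red_shapes: "red M m \<Longrightarrow> (\<exists>N. m = {#(1, N)#}) \<or> (\<exists>A B. m = {#(1/2, A), (1/2, B)#})"
  unfolding red_def oplus_step_def by blast

lemma ered_imp_red: "ered M m \<Longrightarrow> red M m"
  by (cases rule: ered.cases)
    (auto simp: red_def sred_def dest: beta_w_imp_beta ured_imp_beta)

lemma sred_imp_ered: "sred M m \<Longrightarrow> ered M m"
  by (auto simp: snormal_def intro: ered_s)

lemma ered_not_normal: "ered M m \<Longrightarrow> \<not> normal M"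
  using ered_imp_red unfolding normal_def by blast

lemma ered_exists: "\<not> normal M \<Longrightarrow> \<exists>m. ered M m"
proof (cases "snormal M")
  case True
  assume "\<not> normal M"
  then have "\<exists>N. beta M N" using True normal_iff snormal_iff beta_normal_def by blast
  then obtain N where "ured M N" by (metis beta_imp_ex_ured)
  with True show ?thesis by (blast intro: ered_u)
qed (use sred_imp_ered snormal_def in blast)

lemma Elift_single_iff: "Elift {#(1, M)#} m \<longleftrightarrow> (normal M \<and> m = {#(1, M)#}) \<or> ered M m"
  unfolding Elift_def using lifting_single_cases ered_not_normal by (blast intro: lift_refl lift_step)

lemma Elift_imp_Rlift: "Elift m m' \<Longrightarrow> Rlift m m'"
  unfolding Elift_def Rlift_def by (erule lifting_mono) (auto intro: ered_imp_red)

lemma Rlift_refl: "Rlift m m"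
  unfolding Rlift_def by (rule lifting_refl)

lemma Elift_exists: "\<exists>m'. Elift m m'"
  unfolding Elift_def by (rule lifting_total) (rule ered_exists)

lemma sred_cases [consumes 1, case_names beta_w choice]:
  assumes "sred M m"
  obtains (beta_w) N where "beta_w M N" "m = {#(1, N)#}"
  | (choice) A B where "choice_split M A B" "m = {#(1/2, A), (1/2, B)#}"
  using assms unfolding sred_def oplus_step_def by blast

lemma ered_cases [consumes 1, case_names beta_w choice ured]:
  assumes "ered M m"
  obtains (beta_w) N where "beta_w M N" "m = {#(1, N)#}"
  | (choice) A B where "choice_split M A B" "m = {#(1/2, A), (1/2, B)#}"
  | (ured) N where "snormal M" "ured M N" "m = {#(1, N)#}"
  using assms by (cases rule: ered.cases) (auto elim: sred_cases)

lemma sred_beta_w_choice_join: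
  assumes "beta_w M N" "choice_split M A B"
  shows "\<exists>r. lifting (\<lambda>_. False) sred {#(1, N)#} r \<and> lifting (\<lambda>_. False) sred {#(1/2, A), (1/2, B)#} r"
proof -
  obtain A' B' where AB': "choice_split N A' B'" "beta_w A A'" "beta_w B B'"
    using beta_w_choice_split_commute assms by blast
  have "lifting (\<lambda>_. False) sred {#(1, N)#} {#(1/2, A'), (1/2, B')#}"
    using AB'(1) unfolding sred_def oplus_step_def by (blast intro: lift_step)
  moreover have "lifting (\<lambda>_. False) sred {#(1/2, A), (1/2, B)#} (scale (1/2) {#(1, A')#} + scale (1/2) {#(1, B')#})"
    using AB'(2,3) unfolding sred_def by (blast intro: lifting_pair lift_step)
  ultimately show ?thesis by (auto simp: scale_def add_mset_commute)
qed

lemma sred_diamond: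
  assumes "sred M m1" "sred M m2" "m1 \<noteq> m2"
  shows "\<exists>r. lifting (\<lambda>_. False) sred m1 r \<and> lifting (\<lambda>_. False) sred m2 r"
  using assms(1)
proof (cases rule: sred_cases)
  case (beta_w N1)
  from assms(2) show ?thesis
  proof (cases rule: sred_cases)
    case (beta_w N2)
    then obtain P where "beta_w N1 P" "beta_w N2 P"
      using \<open>beta_w M N1\<close> \<open>m1 = {#(1, N1)#}\<close> assms(3) beta_w_diamond by blast
    then show ?thesis
      using \<open>m1 = {#(1, N1)#}\<close> \<open>m2 = {#(1, N2)#}\<close> unfolding sred_def by (blast intro: lift_step)
  next
    case (choice A B)
    then show ?thesis using beta_w sred_beta_w_choice_join by blast
  qed
next
  case (choice A1 B1)
  from assms(2) show ?thesis
  proof (cases rule: sred_cases)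
    case (beta_w N2)
    then show ?thesis using choice sred_beta_w_choice_join by blast
  next
    case (choice A2 B2)
    with \<open>m1 = {#(1/2, A1), (1/2, B1)#}\<close> assms(3) have "\<not> (A1 = A2 \<and> B1 = B2)" by auto
    then obtain X Y Z W where splits: "choice_split A1 X Y" "choice_split B1 Z W"
      "choice_split A2 X Z" "choice_split B2 Y W"
      using choice_split_diamond \<open>choice_split M A1 B1\<close> \<open>choice_split M A2 B2\<close> by blast
    have "lifting (\<lambda>_. False) sred m1 (scale (1/2) {#(1/2, X), (1/2, Y)#} + scale (1/2) {#(1/2, Z), (1/2, W)#})"
      unfolding \<open>m1 = {#(1/2, A1), (1/2, B1)#}\<close> sred_def oplus_step_def
      using splits by (blast intro: lifting_pair lift_step)
    moreover have "lifting (\<lambda>_. False) sred m2 (scale (1/2) {#(1/2, X), (1/2, Z)#} + scale (1/2) {#(1/2, Y), (1/2, W)#})"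
      unfolding \<open>m2 = {#(1/2, A2), (1/2, B2)#}\<close> sred_def oplus_step_def
      using splits by (blast intro: lifting_pair lift_step)
    ultimately show ?thesis by (auto simp: scale_def add_mset_commute)
  qed
qed

text \<open>The joining liftings admit no reflexive steps, so neither side contains a normal term.\<close>

lemma ered_diamond:
  assumes "ered M m1" "ered M m2" "m1 \<noteq> m2"
  shows "\<exists>r. lifting (\<lambda>_. False) ered m1 r \<and> lifting (\<lambda>_. False) ered m2 r"
  using assms(1)
proof (cases rule: ered.cases)
  case ered_s
  from assms(2) show ?thesis
  proof (cases rule: ered.cases)
    case ered_s
    then obtain r where "lifting (\<lambda>_. False) sred m1 r" "lifting (\<lambda>_. False) sred m2 r"
      using sred_diamond \<open>sred M m1\<close> assms(3) by blast
    then show ?thesis using sred_imp_ered by (blast intro: lifting_mono)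
  qed (use ered_s in blast)
next
  case (ered_u M1)
  from assms(2) show ?thesis
  proof (cases rule: ered.cases)
    case (ered_u M2)
    then obtain P where P: "ured M1 P" "ured M2 P"
      using ured_diamond \<open>ured M M1\<close> \<open>m1 = {#(1, M1)#}\<close> assms(3) by blast
    moreover have "snormal M1" "snormal M2"
      using \<open>ured M M1\<close> ered_u snormal_beta ured_imp_beta \<open>snormal M\<close> by blast+
    ultimately show ?thesis
      using \<open>m1 = {#(1, M1)#}\<close> \<open>m2 = {#(1, M2)#}\<close> by (blast intro: lift_step ered.ered_u)
  qed (use ered_u in blast)
qed

lemma strict_ered_liftingD:
  assumes "lifting (\<lambda>_. False) ered m r"
  shows "Elift m r" and "\<And>p M. (p, M) \<in># m \<Longrightarrow> \<not> normal M"
  using assms unfolding Elift_def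
  by (auto elim: lifting_mono dest!: strict_lifting_reduces[OF assms] ered_not_normal)

section \<open>Normal-form probabilities\<close>

definition E_succ :: "trm \<Rightarrow> mdist" where
  "E_succ M = (SOME m. Elift {#(1, M)#} m)"

lemma Elift_E_succ: "Elift {#(1, M)#} (E_succ M)"
  unfolding E_succ_def using Elift_exists by (rule someI_ex)

lemma E_succ_normal: "normal M \<Longrightarrow> E_succ M = {#(1, M)#}"
  using Elift_E_succ Elift_single_iff ered_not_normal by blast

lemma Elift_single_shapes:
  "Elift {#(1, M)#} m \<Longrightarrow> (\<exists>N. m = {#(1, N)#}) \<or> (\<exists>A B. m = {#(1/2, A), (1/2, B)#})"
  unfolding Elift_single_iff using ered_imp_red red_shapes by blast

text \<open>\<open>nf_prob_within k N M\<close> is the probability of sitting at the normal form \<open>N\<close> after \<open>k\<close>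
  \<open>E\<close>-steps from \<open>M\<close>; by \<open>Elift_successors_agree\<close> it does not depend on the choice made by
  \<open>E_succ\<close>.\<close>

fun nf_prob_within :: "nat \<Rightarrow> trm \<Rightarrow> trm \<Rightarrow> real" where
  "nf_prob_within 0 N M = (if M = N \<and> normal M then 1 else 0)"
| "nf_prob_within (Suc k) N M = expect (E_succ M) (nf_prob_within k N)"

lemma expect_nf_prob_within_0_non_normal:
  "(\<And>p M. (p, M) \<in># m \<Longrightarrow> \<not> normal M) \<Longrightarrow> expect m (nf_prob_within 0 N) = 0"
  by (induct m) fastforce+

lemma Elift_successors_agree:
  assumes "Elift {#(1, M)#} m1" "Elift {#(1, M)#} m2"
  shows "expect m1 (nf_prob_within k N) = expect m2 (nf_prob_within k N)"
  using assms
proof (induct k arbitrary: M m1 m2)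
  case 0
  show ?case
  proof (cases "m1 = m2")
    case False
    with 0 have "ered M m1" "ered M m2" by (auto simp: Elift_single_iff dest: ered_not_normal)
    with False obtain r where r: "lifting (\<lambda>_. False) ered m1 r" "lifting (\<lambda>_. False) ered m2 r"
      using ered_diamond by blast
    have "expect m1 (nf_prob_within 0 N) = 0" "expect m2 (nf_prob_within 0 N) = 0"
      using strict_ered_liftingD(2)[OF r(1)] strict_ered_liftingD(2)[OF r(2)]
      by (blast intro: expect_nf_prob_within_0_non_normal)+
    then show ?thesis by (simp only:)
  qed simp
next
  case (Suc k)
  have step: "expect m'' (nf_prob_within k N) = nf_prob_within (Suc k) N X" if "ered X m''" for X m''
    using Suc.hyps[of X m'' "E_succ X"] Elift_E_succ that by (simp add: Elift_single_iff)
  show ?case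
  proof (cases "m1 = m2")
    case False
    with Suc.prems have "ered M m1" "ered M m2" by (auto simp: Elift_single_iff dest: ered_not_normal)
    with False obtain r where "lifting (\<lambda>_. False) ered m1 r" "lifting (\<lambda>_. False) ered m2 r"
      using ered_diamond by blast
    then have "expect r (nf_prob_within k N) = expect m1 (nf_prob_within (Suc k) N)"
      and "expect r (nf_prob_within k N) = expect m2 (nf_prob_within (Suc k) N)"
      using step by (blast intro: lifting_expect_eq)+
    then show ?thesis by linarith
  qed simp
qed

lemma expect_Elift_single_nf_prob_within:
  "Elift {#(1, M)#} m \<Longrightarrow> expect m (nf_prob_within k N) = nf_prob_within (Suc k) N M"
  using Elift_successors_agree[OF _ Elift_E_succ] by simp

lemma nf_prob_within_normal: "normal M \<Longrightarrow> nf_prob_within (Suc k) N M = nf_prob_within k N M"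
  by (simp add: E_succ_normal)

lemma expect_Elift_nf_prob_within:
  "Elift m m' \<Longrightarrow> expect m' (nf_prob_within k N) = expect m (nf_prob_within (Suc k) N)"
  unfolding Elift_def
  by (erule lifting_expect_eq)
    (auto simp: nf_prob_within_normal expect_Elift_single_nf_prob_within Elift_single_iff
      simp del: nf_prob_within.simps(2))

lemma obs_eq_expect: "obs m N = expect m (nf_prob_within 0 N)"
  by (induct m) (auto simp: obs_def)

lemma obs_Elift_chain:
  assumes "\<And>i. Elift (s i) (s (Suc i))"
  shows "obs (s n) N = expect (s 0) (nf_prob_within n N)"
  using assms
proof (induct n arbitrary: s)
  case (Suc n)
  have "obs (s (Suc n)) N = expect (s (Suc 0)) (nf_prob_within n N)"
    using Suc.hyps[of "\<lambda>i. s (Suc i)"] Suc.prems by simp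
  also have "\<dots> = expect (s 0) (nf_prob_within (Suc n) N)"
    using expect_Elift_nf_prob_within Suc.prems by blast
  finally show ?case .
qed (simp add: obs_eq_expect del: nf_prob_within.simps)

lemma expect_Elift_single_bounds:
  assumes "Elift {#(1, M)#} m" "\<And>X. 0 \<le> f X \<and> f X \<le> 1"
  shows "0 \<le> expect m f \<and> expect m f \<le> 1"
proof -
  from Elift_single_shapes[OF assms(1)]
  consider N where "m = {#(1, N)#}" | A B where "m = {#(1/2, A), (1/2, B)#}" by blast
  then show ?thesis
  proof cases
    case 1
    then show ?thesis using assms(2)[of N] by simp
  next
    case (2 A B)
    then show ?thesis using assms(2)[of A] assms(2)[of B] by simp
  qed
qed

lemma weights_pos_E_succ: "weights_pos (E_succ M)"
  using Elift_single_shapes[OF Elift_E_succ[of M]] by auto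

lemma nf_prob_within_bounds: "0 \<le> nf_prob_within k N M \<and> nf_prob_within k N M \<le> 1"
proof (induct k arbitrary: M)
  case (Suc k)
  then show ?case using expect_Elift_single_bounds[OF Elift_E_succ] by simp
qed simp

lemma nf_prob_within_Suc_ge: "nf_prob_within k N M \<le> nf_prob_within (Suc k) N M"
proof (induct k arbitrary: M)
  case 0
  show ?case
    using nf_prob_within_bounds[of 1 N M] by (cases "normal M") (auto simp: E_succ_normal)
next
  case (Suc k)
  then show ?case by (auto intro: expect_mono weights_pos_E_succ)
qed

lemma incseq_nf_prob_within: "incseq (\<lambda>k. nf_prob_within k N M)"
  using nf_prob_within_Suc_ge by (rule incseq_SucI)

definition nf_prob :: "trm \<Rightarrow> trm \<Rightarrow> real" where
  "nf_prob N M = (SUP k. nf_prob_within k N M)"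

lemma nf_prob_within_tendsto: "(\<lambda>k. nf_prob_within k N M) \<longlonglongrightarrow> nf_prob N M"
  unfolding nf_prob_def
  by (rule LIMSEQ_incseq_SUP[OF bdd_aboveI2 incseq_nf_prob_within]) (use nf_prob_within_bounds in blast)

lemma nf_prob_within_le_nf_prob: "nf_prob_within k N M \<le> nf_prob N M"
  using incseq_le[OF incseq_nf_prob_within nf_prob_within_tendsto] .

lemma nf_prob_nonneg: "0 \<le> nf_prob N M"
  using nf_prob_within_bounds[of 0 N M] nf_prob_within_le_nf_prob[of 0 N M] by linarith

lemma expect_nf_prob_within_tendsto:
  "(\<lambda>k. expect m (nf_prob_within k N)) \<longlonglongrightarrow> expect m (nf_prob N)"
  by (induct m) (auto intro!: tendsto_add tendsto_mult_left nf_prob_within_tendsto)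

lemma SUP_expect_nf_prob_within:
  assumes "weights_pos m"
  shows "(SUP k. expect m (nf_prob_within k N)) = expect m (nf_prob N)"
proof -
  have inc: "incseq (\<lambda>k. expect m (nf_prob_within k N))"
    using assms nf_prob_within_Suc_ge by (intro incseq_SucI expect_mono)
  have "bdd_above (range (\<lambda>k. expect m (nf_prob_within k N)))"
    by (rule bdd_aboveI2) (rule incseq_le[OF inc expect_nf_prob_within_tendsto])
  with inc show ?thesis
    using LIMSEQ_unique[OF LIMSEQ_incseq_SUP expect_nf_prob_within_tendsto] by blast
qed

lemma nf_prob_Elift_single:
  assumes "Elift {#(1, M)#} m"
  shows "nf_prob N M = expect m (nf_prob N)"
proof -
  have "(\<lambda>k. nf_prob_within (Suc k) N M) = (\<lambda>k. expect m (nf_prob_within k N))"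
    using expect_Elift_single_nf_prob_within[OF assms] by simp
  then show ?thesis
    using LIMSEQ_Suc[OF nf_prob_within_tendsto] expect_nf_prob_within_tendsto LIMSEQ_unique by metis
qed

lemma nf_prob_ered: "ered M m \<Longrightarrow> nf_prob N M = expect m (nf_prob N)"
  by (simp add: nf_prob_Elift_single Elift_single_iff)

lemma nf_prob_beta_w: "beta_w M M' \<Longrightarrow> nf_prob N M = nf_prob N M'"
  using nf_prob_ered[OF sred_imp_ered, of M "{#(1, M')#}"] by (simp add: sred_def)

lemma nf_prob_rtranclp_beta_w: "beta_w\<^sup>*\<^sup>* M M' \<Longrightarrow> nf_prob N M = nf_prob N M'"
  by (induct rule: rtranclp_induct) (auto simp: nf_prob_beta_w)

text \<open>Without surface choices, unbiased steps are \<open>E\<close>-steps.\<close>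

lemma nf_prob_rtranclp_ured: "ured\<^sup>*\<^sup>* M M' \<Longrightarrow> \<not> splittable M' \<Longrightarrow> nf_prob N M = nf_prob N M'"
proof (induct rule: converse_rtranclp_induct)
  case (step M M1)
  then have "\<not> splittable M"
    using splittable_rtranclp_beta rtranclp_ured_imp_beta converse_rtranclp_into_rtranclp by metis
  then have "ered M {#(1, M1)#}"
    using step(1) snormal_iff ured_not_wnormal sred_def sred_imp_ered by (metis ered.ered_u)
  then show ?case using step nf_prob_ered by simp
qed simp

section \<open>Reductions do not increase normal-form probabilities\<close>

lemma nf_prob_choice_split:
  assumes "choice_split M A B"
  shows "nf_prob N M = (nf_prob N A + nf_prob N B) / 2"
proof -
  have "ered M {#(1/2, A), (1/2, B)#}"
    using assms by (intro sred_imp_ered) (unfold sred_def oplus_step_def, blast)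
  then show ?thesis by (simp add: nf_prob_ered add_divide_distrib)
qed

lemma par_ered_simulation:
  assumes "par M M'" "ered M' m'"
  obtains (single) X X' where "m' = {#(1, X')#}" "par X X'" "nf_prob N M = nf_prob N X"
  | (pair) A B A' B' where "m' = {#(1/2, A'), (1/2, B')#}" "par A A'" "par B B'"
      "nf_prob N M = (nf_prob N A + nf_prob N B) / 2"
proof -
  obtain M0 where M0: "beta_w\<^sup>*\<^sup>* M M0" "ipar M0 M'" using par_factorization assms(1) by blast
  from M0(1) have M_M0: "nf_prob N M = nf_prob N M0" by (rule nf_prob_rtranclp_beta_w)
  from assms(2) show thesis
  proof (cases rule: ered_cases)
    case (beta_w M'')
    then obtain X where "beta_w M0 X" "par X M''" using ipar_beta_w_swap M0(2) by blast
    then show thesis using single beta_w M_M0 nf_prob_beta_w by metis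
  next
    case (choice A' B')
    then obtain A B where "choice_split M0 A B" "par A A'" "par B B'"
      using ipar_choice_split M0(2) by blast
    then show thesis using pair choice M_M0 nf_prob_choice_split by metis
  next
    case (ured M'')
    then obtain X where X: "ured\<^sup>*\<^sup>* M X" "par X M''" using par_ured_swap assms(1) by blast
    have "snormal M''" using ured snormal_beta ured_imp_beta by blast
    then have "\<not> splittable X" using X(2) snormal_iff splittable_par by blast
    then show thesis using single ured X nf_prob_rtranclp_ured by metis
  qed
qed

lemma nf_prob_within_le_nf_prob_par: "par M M' \<Longrightarrow> nf_prob_within k N M' \<le> nf_prob N M"
proof (induct k arbitrary: M M')
  case 0
  show ?case
  proof (cases "normal M'")
    case True
    then have "ured\<^sup>*\<^sup>* M M'" "\<not> splittable M'"
      using par_beta_normal_imp_rtranclp_ured 0 normal_iff by blast+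
    then show ?thesis using nf_prob_rtranclp_ured nf_prob_within_le_nf_prob by metis
  qed (simp add: nf_prob_nonneg)
next
  case (Suc k)
  show ?case
  proof (cases "normal M'")
    case True
    then show ?thesis using Suc by (simp add: nf_prob_within_normal del: nf_prob_within.simps(2))
  next
    case False
    then have "ered M' (E_succ M')" using Elift_E_succ Elift_single_iff by blast
    with Suc.prems show ?thesis
    proof (cases rule: par_ered_simulation[where N = N])
      case (single X X')
      then show ?thesis using Suc.hyps[of X X'] by simp
    next
      case (pair A B A' B')
      then show ?thesis using Suc.hyps[of A A'] Suc.hyps[of B B'] by simp
    qed
  qed
qed

lemma nf_prob_par_antimono: "par M M' \<Longrightarrow> nf_prob N M' \<le> nf_prob N M"
  unfolding nf_prob_def[of N M'] by (rule cSUP_least) (auto intro: nf_prob_within_le_nf_prob_par)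

lemma red_expect_nf_prob_le: "red M m \<Longrightarrow> expect m (nf_prob N) \<le> nf_prob N M"
  unfolding red_def oplus_step_def
  using nf_prob_par_antimono beta_imp_par nf_prob_choice_split by (auto simp: add_divide_distrib)

lemma Rlift_expect_nf_prob_le:
  "Rlift m m' \<Longrightarrow> weights_pos m \<Longrightarrow> expect m' (nf_prob N) \<le> expect m (nf_prob N)"
  unfolding Rlift_def by (erule lifting_expect_le) (auto intro: red_expect_nf_prob_le)

lemma Rlift_weights_pos: "Rlift m m' \<Longrightarrow> weights_pos m \<Longrightarrow> weights_pos m'"
  unfolding Rlift_def by (erule lifting_weights_pos) (auto dest: red_shapes)

lemma Elift_sequence_exists: "\<exists>s. s 0 = m \<and> (\<forall>n. Elift (s n) (s (Suc n)))"
proof -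
  obtain F where "\<And>x. Elift x (F x)" using Elift_exists by metis
  then show ?thesis by (intro exI[of _ "\<lambda>n. (F ^^ n) m"]) simp
qed

lemma max_seq_Elift_iff: "max_seq Elift m s \<longleftrightarrow> s 0 = m \<and> (\<forall>n. Elift (s n) (s (Suc n)))"
  unfolding max_seq_def using Elift_exists by blast

lemma max_seq_RliftD: "max_seq Rlift m s \<Longrightarrow> s 0 = m \<and> (\<forall>n. Rlift (s n) (s (Suc n)))"
  unfolding max_seq_def using Rlift_refl by blast

lemma obs_limit_Elift_chain:
  assumes "weights_pos (s 0)" "\<forall>n. Elift (s n) (s (Suc n))"
  shows "(\<lambda>N. SUP n. obs (s n) N) = (\<lambda>N. expect (s 0) (nf_prob N))"
  using obs_Elift_chain[of s] SUP_expect_nf_prob_within[OF assms(1)] assms(2) by simp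

lemma Lim_Elift: "weights_pos m \<Longrightarrow> Lim Elift m = {\<lambda>N. expect m (nf_prob N)}"
  unfolding Lim_def max_seq_Elift_iff using Elift_sequence_exists obs_limit_Elift_chain by fastforce

lemma E_limit_in_Lim_Rlift: "weights_pos m \<Longrightarrow> (\<lambda>N. expect m (nf_prob N)) \<in> Lim Rlift m"
proof -
  assume m: "weights_pos m"
  obtain s where s: "s 0 = m" "\<forall>n. Elift (s n) (s (Suc n))" using Elift_sequence_exists by blast
  then have "max_seq Rlift m s" unfolding max_seq_def using Elift_imp_Rlift by blast
  moreover have "(\<lambda>N. SUP n. obs (s n) N) = (\<lambda>N. expect m (nf_prob N))"
    using obs_limit_Elift_chain[of s] m s by simp
  ultimately show ?thesis unfolding Lim_def by auto
qed

lemma Lim_Rlift_le: "weights_pos m \<Longrightarrow> r \<in> Lim Rlift m \<Longrightarrow> r \<le> (\<lambda>N. expect m (nf_prob N))"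
proof -
  assume m: "weights_pos m" and "r \<in> Lim Rlift m"
  then obtain s where s: "max_seq Rlift m s" and r: "r = (\<lambda>N. SUP n. obs (s n) N)"
    unfolding Lim_def by blast
  then have s0: "s 0 = m" and steps: "\<And>n. Rlift (s n) (s (Suc n))" using max_seq_RliftD by auto
  have pos: "weights_pos (s n)" for n
    by (induct n) (use m s0 steps Rlift_weights_pos in auto)
  have expect_le: "expect (s n) (nf_prob N) \<le> expect m (nf_prob N)" for n N
  proof (induct n)
    case (Suc n)
    then show ?case using Rlift_expect_nf_prob_le[OF steps pos, of n N] by linarith
  qed (simp add: s0)
  have "obs (s n) N \<le> expect (s n) (nf_prob N)" for n N
    unfolding obs_eq_expect using pos nf_prob_within_le_nf_prob by (rule expect_mono)
  then have "obs (s n) N \<le> expect m (nf_prob N)" for n N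
    using expect_le order_trans by blast
  then show ?thesis unfolding r le_fun_def by (auto intro!: cSUP_least)
qed

lemma is_greatest_Lim_Rlift: "weights_pos m \<Longrightarrow> is_greatest (Lim Rlift m) (\<lambda>N. expect m (nf_prob N))"
  unfolding is_greatest_def using E_limit_in_Lim_Rlift Lim_Rlift_le by blast

lemma den_eq_expect_nf_prob: "weights_pos m \<Longrightarrow> den m = (\<lambda>N. expect m (nf_prob N))"
  unfolding den_def
  by (rule the_equality) (use is_greatest_Lim_Rlift in \<open>auto simp: is_greatest_def intro: order.antisym\<close>)

lemma is_mdist_weights_pos: "is_mdist m \<Longrightarrow> weights_pos m"
  unfolding is_mdist_def weights_pos_def by auto

theorem mainTheorem11:
  assumes "is_mdist m"
  shows "(\<exists>r. is_greatest (Lim Rlift m) r)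
    \<and> (\<forall>r. obs_rel Elift m r \<longleftrightarrow> r = den m)
    \<and> obs_normalizing Elift Rlift"
proof (intro conjI)
  have m: "weights_pos m" using assms by (rule is_mdist_weights_pos)
  then show "\<exists>r. is_greatest (Lim Rlift m) r" using is_greatest_Lim_Rlift by blast
  show "\<forall>r. obs_rel Elift m r \<longleftrightarrow> r = den m"
    using Lim_Elift[OF m] den_eq_expect_nf_prob[OF m] unfolding obs_rel_def by auto
  show "obs_normalizing Elift Rlift"
    unfolding obs_normalizing_def obs_rel_def is_maximal_def
    using Elift_imp_Rlift Lim_Elift Lim_Rlift_le is_mdist_weights_pos by auto
qed

end
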